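(* Let $\lambda$ be a partition with $n$ parts and let $\beta \in U_\lambda(n)$. If the terminal pair $(\lambda,\beta)$ is nonpermutable, then $\beta \in UGC_\lambda(n) \cap UBP_\lambda(n)$.
   Context: Fix an integer $n \geq 1$ and write $[k] = \{1,\dots,k\}$. A partition is $\lambda = (\lambda_1,\dots,\lambda_n)$ with $\lambda_1 \geq \dots \geq \lambda_n \geq 0$ integers. Let $R_\lambda \subseteq [n-1]$ be the set of $q \in [n-1]$ with $\lambda_q > \lambda_{q+1}$; write its elements $q_1 < \dots < q_r$, and set $q_0 := 0$, $q_{r+1} := n$. For $h \in [r+1]$ the $h$-th carrel is the index interval $\{q_{h-1}+1,\dots,q_h\}$. A $\lambda$-tuple is an $n$-tuple $\beta$ with entries in $[n]$, considered with this carrel structure; it is upper if $\beta_i \geq i$ for all $i$. $U_\lambda(n)$ is the set of upper $\lambda$-tuples. Critical indices: for $\beta \in U_\lambda(n)$ and $h \in [r+1]$, set $x_1 := q_h$; given $x_{u-1}$, if some index $x$ with $q_{h-1} < x < x_{u-1}$ satisfies $\beta_{x_{u-1}} - \beta_x > x_{u-1} - x$, let $x_u$ be the largest such $x$, otherwise stop. The $x_u$ are the critical indices of $\beta$ in carrel $h$; the pairs $(x_u,\beta_{x_u})$ form its critical list. For $i \in [n]$ let $x(i)$ be the smallest critical index in the carrel of $i$ with $x(i) \geq i$. The $\lambda$-platform is $\Xi_\lambda(\beta) := \xi$ with $\xi_i := \beta_{x(i)}$. The critical list is a flag critical list if for every $h \in [r]$, $\beta_{q_h} \leq \beta_k$ where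 $k$ is the smallest critical index of $\beta$ in carrel $h+1$. $UGC_\lambda(n)$ is the set of $\beta \in U_\lambda(n)$ with flag critical list; $UBP_\lambda(n)$ is the set of $\beta \in U_\lambda(n)$ with $\beta_i \leq \Xi_\lambda(\beta)_i$ for all $i$. Lattice paths: lattice points are integer pairs $(a,b)$ with $a \geq 0$, $b \geq 1$. A lattice path is a sequence of lattice points each consecutive step of which is $(a,b) \to (a+1,b)$ or $(a,b) \to (a,b+1)$. An $n$-path is $(\Lambda_1,\dots,\Lambda_n)$ with $\Lambda_m$ a lattice path starting at $(n-m,m)$. The terminals of $(\lambda,\beta)$ are $P_m := (\lambda_m + n - m, \beta_m)$, $m \in [n]$. For a permutation $\pi$ of $[n]$, $\mathcal{LD}_\lambda(\beta;\pi)$ is the set of $n$-paths with $\Lambda_m$ ending at $P_{\pi_m}$ for every $m$ and no two distinct components sharing a lattice point. The pair $(\lambda,\beta)$ is nonpermutable if $\mathcal{LD}_\lambda(\beta;\pi) = \emptyset$ for every permutation $\pi \neq (1,\dots,n)$. *)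

theory Defs
  imports Main "HOL-Combinatorics.Permutations"
begin

text \<open>Conventions: n-tuples are functions on nat, only values at indices 1..n matter.\<close>

definition is_partition :: "nat \<Rightarrow> (nat \<Rightarrow> nat) \<Rightarrow> bool" where
  "is_partition n lam \<longleftrightarrow> (\<forall>i. 1 \<le> i \<and> i < n \<longrightarrow> lam (Suc i) \<le> lam i)"

definition Rset :: "nat \<Rightarrow> (nat \<Rightarrow> nat) \<Rightarrow> nat set" where
  "Rset n lam = {q. 1 \<le> q \<and> q < n \<and> lam (Suc q) < lam q}"

definition Upper :: "nat \<Rightarrow> (nat \<Rightarrow> nat) set" where
  "Upper n = {beta. \<forall>i\<in>{1..n}. i \<le> beta i \<and> beta i \<le> n}"

text \<open>Carrels are indexed by their top index t in R union {n}; their bottom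
  boundary (exclusive) is the largest element of R union {0} below t
  (this is q_(h-1) when t = q_h).\<close>
definition carrel_low :: "nat \<Rightarrow> (nat \<Rightarrow> nat) \<Rightarrow> nat \<Rightarrow> nat" where
  "carrel_low n lam t = Max ({q \<in> Rset n lam \<union> {0}. q < t})"

definition carrel_top :: "nat \<Rightarrow> (nat \<Rightarrow> nat) \<Rightarrow> nat \<Rightarrow> nat" where
  "carrel_top n lam i = Min ({q \<in> Rset n lam \<union> {n}. i \<le> q})"

inductive_set crit :: "nat \<Rightarrow> nat \<Rightarrow> (nat \<Rightarrow> nat) \<Rightarrow> nat set"
  for L U :: nat and beta :: "nat \<Rightarrow> nat" where
  top: "U \<in> crit L U beta"
| step: "\<lbrakk> y \<in> crit L U beta; L < x; x < y;
           int (beta y) - int (beta x) > int y - int x;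
           \<forall>z. x < z \<and> z < y \<longrightarrow> \<not> (int (beta y) - int (beta z) > int y - int z) \<rbrakk>
         \<Longrightarrow> x \<in> crit L U beta"

definition crit_carrel :: "nat \<Rightarrow> (nat \<Rightarrow> nat) \<Rightarrow> (nat \<Rightarrow> nat) \<Rightarrow> nat \<Rightarrow> nat set" where
  "crit_carrel n lam beta t = crit (carrel_low n lam t) t beta"

definition xcrit :: "nat \<Rightarrow> (nat \<Rightarrow> nat) \<Rightarrow> (nat \<Rightarrow> nat) \<Rightarrow> nat \<Rightarrow> nat" where
  "xcrit n lam beta i = Min {x \<in> crit_carrel n lam beta (carrel_top n lam i). i \<le> x}"

definition platform :: "nat \<Rightarrow> (nat \<Rightarrow> nat) \<Rightarrow> (nat \<Rightarrow> nat) \<Rightarrow> nat \<Rightarrow> nat" where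
  "platform n lam beta i = beta (xcrit n lam beta i)"

text \<open>Flag critical list: for each q_h in R (h in [r]), beta q_h <= beta k with k the
  smallest critical index of the next carrel (whose top is the smallest element of
  R union {n} above q_h).\<close>
definition UGC :: "nat \<Rightarrow> (nat \<Rightarrow> nat) \<Rightarrow> (nat \<Rightarrow> nat) set" where
  "UGC n lam = {beta \<in> Upper n. \<forall>q \<in> Rset n lam.
      beta q \<le> beta (Min (crit_carrel n lam beta (carrel_top n lam (Suc q))))}"

definition UBP :: "nat \<Rightarrow> (nat \<Rightarrow> nat) \<Rightarrow> (nat \<Rightarrow> nat) set" where
  "UBP n lam = {beta \<in> Upper n. \<forall>i\<in>{1..n}. beta i \<le> platform n lam beta i}"

definition lattice_step :: "nat \<times> nat \<Rightarrow> nat \<times> nat \<Rightarrow> bool" where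
  "lattice_step p q \<longleftrightarrow> q = (fst p + 1, snd p) \<or> q = (fst p, snd p + 1)"

definition lattice_path :: "(nat \<times> nat) list \<Rightarrow> bool" where
  "lattice_path xs \<longleftrightarrow> xs \<noteq> [] \<and> (\<forall>p\<in>set xs. 1 \<le> snd p)
     \<and> (\<forall>i. Suc i < length xs \<longrightarrow> lattice_step (xs ! i) (xs ! Suc i))"

definition terminal :: "nat \<Rightarrow> (nat \<Rightarrow> nat) \<Rightarrow> (nat \<Rightarrow> nat) \<Rightarrow> nat \<Rightarrow> nat \<times> nat" where
  "terminal n lam beta m = (lam m + n - m, beta m)"

definition LD :: "nat \<Rightarrow> (nat \<Rightarrow> nat) \<Rightarrow> (nat \<Rightarrow> nat) \<Rightarrow> (nat \<Rightarrow> nat)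
                  \<Rightarrow> (nat \<Rightarrow> (nat \<times> nat) list) set" where
  "LD n lam beta pi = {Lam. (\<forall>m\<in>{1..n}. lattice_path (Lam m)
        \<and> hd (Lam m) = (n - m, m) \<and> last (Lam m) = terminal n lam beta (pi m))
      \<and> (\<forall>m\<in>{1..n}. \<forall>m'\<in>{1..n}. m \<noteq> m' \<longrightarrow> set (Lam m) \<inter> set (Lam m') = {})}"

definition nonpermutable :: "nat \<Rightarrow> (nat \<Rightarrow> nat) \<Rightarrow> (nat \<Rightarrow> nat) \<Rightarrow> bool" where
  "nonpermutable n lam beta \<longleftrightarrow>
     (\<forall>pi. pi permutes {1..n} \<and> pi \<noteq> id \<longrightarrow> LD n lam beta pi = {})"

end

theory Submission
  imports Defs
begin

text \<open>Suppose \<open>beta\<close> violates the flag or the platform condition. Then some critical index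
  \<open>b\<close> has an earlier index \<open>i\<close> with \<open>beta i > beta b\<close>; let \<open>a\<close> be the last index of \<open>[i, b)\<close>
  with \<open>beta a > beta b\<close>. Nonintersecting paths then exist for the cycle \<open>(a a+1 \<dots> b)\<close>:
  path \<open>k\<close> ends at \<open>P (k+1)\<close> for \<open>a \<le> k < b\<close> and path \<open>b\<close> at \<open>P a\<close>, passing above row
  \<open>beta b\<close>. Criticality of \<open>b\<close> gives \<open>beta m - m > beta b - b\<close> for the later indices
  \<open>m\<close> of its carrel, which leaves room for the paths of equal part size to climb diagonally
  above path \<open>b\<close>. So \<open>(lam, beta)\<close> is permutable.\<close>

definition hseg :: "nat \<Rightarrow> nat \<Rightarrow> nat \<Rightarrow> (nat \<times> nat) list" where
  "hseg a b y = map (\<lambda>x. (x, y)) [a..<Suc b]"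

definition vseg :: "nat \<Rightarrow> nat \<Rightarrow> nat \<Rightarrow> (nat \<times> nat) list" where
  "vseg x a b = map (\<lambda>y. (x, y)) [a..<Suc b]"

definition staircase :: "nat \<Rightarrow> nat \<Rightarrow> nat \<Rightarrow> nat \<Rightarrow> nat \<Rightarrow> nat \<Rightarrow> (nat \<times> nat) list" where
  "staircase x0 y0 x1 y1 x2 y2 =
     hseg x0 x1 y0 @ vseg x1 (Suc y0) y1 @ hseg (Suc x1) x2 y1 @ vseg x2 (Suc y1) y2"

lemma lattice_path_iff_successively:
  "lattice_path xs \<longleftrightarrow> xs \<noteq> [] \<and> (\<forall>p\<in>set xs. 1 \<le> snd p) \<and> successively lattice_step xs"
  by (simp add: lattice_path_def successively_conv_nth)

lemma successively_hseg: "successively lattice_step (hseg a b y)"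
  by (simp add: hseg_def successively_map lattice_step_def successively_conv_nth del: upt_Suc)

lemma successively_vseg: "successively lattice_step (vseg x a b)"
  by (simp add: vseg_def successively_map lattice_step_def successively_conv_nth del: upt_Suc)

lemma hseg_eq_Nil_iff [simp]: "hseg a b y = [] \<longleftrightarrow> b < a"
  by (auto simp: hseg_def)

lemma vseg_eq_Nil_iff [simp]: "vseg x a b = [] \<longleftrightarrow> b < a"
  by (auto simp: vseg_def)

lemma hd_last_hseg [simp]: "a \<le> b \<Longrightarrow> hd (hseg a b y) = (a, y) \<and> last (hseg a b y) = (b, y)"
  by (simp add: hseg_def hd_map last_map del: upt_Suc)

lemma hd_last_vseg [simp]: "a \<le> b \<Longrightarrow> hd (vseg x a b) = (x, a) \<and> last (vseg x a b) = (x, b)"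
  by (simp add: vseg_def hd_map last_map del: upt_Suc)

lemma mem_staircase_iff:
  "(x, y) \<in> set (staircase x0 y0 x1 y1 x2 y2) \<longleftrightarrow>
     (y = y0 \<and> x0 \<le> x \<and> x \<le> x1) \<or> (x = x1 \<and> y0 < y \<and> y \<le> y1) \<or>
     (y = y1 \<and> x1 < x \<and> x \<le> x2) \<or> (x = x2 \<and> y1 < y \<and> y \<le> y2)"
  by (auto simp: staircase_def hseg_def vseg_def)

lemma staircase_lattice_path:
  assumes "x0 \<le> x1" "x1 \<le> x2" "y0 \<le> y1" "y1 \<le> y2" "1 \<le> y0"
  shows "lattice_path (staircase x0 y0 x1 y1 x2 y2)"
    and "hd (staircase x0 y0 x1 y1 x2 y2) = (x0, y0)"
    and "last (staircase x0 y0 x1 y1 x2 y2) = (x2, y2)"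
proof -
  have "successively lattice_step (staircase x0 y0 x1 y1 x2 y2)"
    unfolding staircase_def successively_append_iff
    using assms successively_hseg successively_vseg
    by (cases "y0 = y1"; cases "x1 = x2"; cases "y1 = y2")
       (auto simp: hd_append last_append lattice_step_def)
  then show "lattice_path (staircase x0 y0 x1 y1 x2 y2)"
    using assms by (auto simp: lattice_path_iff_successively staircase_def hseg_def vseg_def)
  show "hd (staircase x0 y0 x1 y1 x2 y2) = (x0, y0)"
    using assms by (simp add: staircase_def)
  show "last (staircase x0 y0 x1 y1 x2 y2) = (x2, y2)"
    using assms by (cases "y0 = y1"; cases "x1 = x2"; cases "y1 = y2") (auto simp: staircase_def last_append)
qed

text \<open>Every point of the second staircase with \<open>x > x1'\<close> has \<open>y \<ge> y1'\<close>, while every point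
  of the first one above row \<open>y0\<close> has \<open>x \<ge> x1\<close>; each alternative of the last hypothesis rules out
  the remaining overlap.\<close>
lemma staircases_disjoint:
  assumes "x1 \<le> x2" "y0 \<le> y1" "y1 \<le> y2" "x1' \<le> x2'" "y0' \<le> y1'"
    and "y0 < y0'" "x1' < x1"
    and "x2' < x1 \<or> y2 < y1' \<or> (x2' \<le> x1 \<and> x1 < x2 \<and> y1 < y1')"
  shows "set (staircase x0 y0 x1 y1 x2 y2) \<inter> set (staircase x0' y0' x1' y1' x2' y2') = {}"
proof -
  have False if "(x, y) \<in> set (staircase x0 y0 x1 y1 x2 y2)"
    and "(x, y) \<in> set (staircase x0' y0' x1' y1' x2' y2')" for x y
    using that assms unfolding mem_staircase_iff by (elim disjE conjE; linarith)
  then show ?thesis by auto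
qed

definition interval_cycle :: "nat \<Rightarrow> nat \<Rightarrow> nat \<Rightarrow> nat" where
  "interval_cycle a b m = (if a \<le> m \<and> m < b then Suc m else if m = b then a else m)"

lemma interval_cycle_permutes:
  assumes "1 \<le> a" "a < b" "b \<le> n"
  shows "interval_cycle a b permutes {1..n}"
proof (rule bij_imp_permutes)
  let ?inv = "\<lambda>m. if a < m \<and> m \<le> b then m - 1 else if m = a then b else m"
  show "bij_betw (interval_cycle a b) {1..n} {1..n}"
    by (rule bij_betw_byWitness[where f' = ?inv]) (use assms in \<open>auto simp: interval_cycle_def\<close>)
  show "interval_cycle a b m = m" if "m \<notin> {1..n}" for m
    using assms that by (auto simp: interval_cycle_def)
qed

lemma interval_cycle_neq_id: "a < b \<Longrightarrow> interval_cycle a b \<noteq> id"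
  by (metis id_apply interval_cycle_def less_irrefl)

lemma is_partition_antimono:
  assumes "is_partition n lam" "1 \<le> i" "i \<le> j" "j \<le> n"
  shows "lam j \<le> lam i"
  using assms(3,4)
proof (induction j rule: dec_induct)
  case (step k)
  then have "lam (Suc k) \<le> lam k"
    using assms(1,2) unfolding is_partition_def by auto
  with step show ?case by simp
qed simp

locale rotation_witness =
  fixes n :: nat and lam beta :: "nat \<Rightarrow> nat" and a b :: nat
  assumes partition: "is_partition n lam"
    and upper: "beta \<in> Upper n"
    and a_b: "1 \<le> a" "a < b" "b \<le> n"
    and lam_b_pos: "1 \<le> lam b"
    and beta_drop: "beta b < beta a"
    and beta_between: "\<And>m. a < m \<Longrightarrow> m < b \<Longrightarrow> beta m \<le> beta b"
    and beta_tail: "\<And>m. b < m \<Longrightarrow> m \<le> n \<Longrightarrow> lam m = lam b \<Longrightarrow> beta b + (m - b) < beta m"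
begin

abbreviation \<sigma> :: "nat \<Rightarrow> nat" where "\<sigma> \<equiv> interval_cycle a b"

definition tx :: "nat \<Rightarrow> nat" where "tx k = lam k + n - k"

text \<open>Path \<open>k\<close> is the hook \<open>(n-k, k) \<rightarrow> (tx (\<sigma> k), k) \<rightarrow> (tx (\<sigma> k), beta (\<sigma> k))\<close>,
  except for \<open>b\<close> and the later indices of equal part size: their paths turn up one column early
  and climb above row \<open>beta b\<close>, each one row higher than the previous, before reaching their end.\<close>

definition lifted :: "nat \<Rightarrow> bool" where
  "lifted k \<longleftrightarrow> b \<le> k \<and> lam k = lam b"

definition bend_x :: "nat \<Rightarrow> nat" where
  "bend_x k = (if lifted k then tx k - 1 else tx (\<sigma> k))"

definition bend_y :: "nat \<Rightarrow> nat" where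
  "bend_y k = (if lifted k then beta b + (k - b) + 1 else beta (\<sigma> k))"

definition path :: "nat \<Rightarrow> (nat \<times> nat) list" where
  "path k = staircase (n - k) k (bend_x k) (bend_y k) (tx (\<sigma> k)) (beta (\<sigma> k))"

lemma lam_antimono: "1 \<le> i \<Longrightarrow> i \<le> j \<Longrightarrow> j \<le> n \<Longrightarrow> lam j \<le> lam i"
  using is_partition_antimono[OF partition] .

lemma beta_bounds: "1 \<le> i \<Longrightarrow> i \<le> n \<Longrightarrow> i \<le> beta i \<and> beta i \<le> n"
  using upper by (auto simp: Upper_def)

lemma tx_add_le: "1 \<le> i \<Longrightarrow> i \<le> j \<Longrightarrow> j \<le> n \<Longrightarrow> tx j + (j - i) \<le> tx i"
  using lam_antimono[of i j] by (auto simp: tx_def)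

lemma tx_add_less: "1 \<le> i \<Longrightarrow> i \<le> j \<Longrightarrow> j \<le> n \<Longrightarrow> lam j < lam i \<Longrightarrow> tx j + (j - i) < tx i"
  by (auto simp: tx_def)

lemma tx_pos: "b \<le> k \<Longrightarrow> k \<le> n \<Longrightarrow> lam k = lam b \<Longrightarrow> 1 \<le> tx k"
  using lam_b_pos by (simp add: tx_def)

lemma lifted_b: "lifted b"
  by (simp add: lifted_def)

lemma lifted_upward:
  assumes "m < m'" "m' \<le> n" "lifted m'" "\<not> lifted m"
  shows "m < b"
proof (rule ccontr)
  assume "\<not> m < b"
  then have "lam m' \<le> lam m" "lam m \<le> lam b"
    using a_b assms lam_antimono by auto
  with assms \<open>\<not> m < b\<close> show False by (simp add: lifted_def)
qed

lemma \<sigma>_mono_unlifted: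
  "m < m' \<Longrightarrow> \<not> lifted m \<Longrightarrow> \<not> lifted m' \<Longrightarrow> \<sigma> m < \<sigma> m'"
  using lifted_b by (auto simp: interval_cycle_def)

lemma \<sigma>_bounds: "1 \<le> k \<Longrightarrow> k \<le> n \<Longrightarrow> 1 \<le> \<sigma> k \<and> \<sigma> k \<le> n"
  using a_b by (auto simp: interval_cycle_def)

lemma bend_x_strict_antimono:
  assumes "1 \<le> m" "m < m'" "m' \<le> n"
  shows "bend_x m' < bend_x m"
proof (cases "lifted m"; cases "lifted m'")
  assume "lifted m" "lifted m'"
  then show ?thesis
    using assms tx_add_le[of m m'] tx_pos[of m'] by (auto simp: bend_x_def lifted_def)
next
  assume "lifted m" "\<not> lifted m'"
  then have "lam m' < lam m" "\<sigma> m' = m'"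
    using assms lam_antimono[of m m'] a_b by (auto simp: lifted_def interval_cycle_def)
  then show ?thesis
    using assms tx_add_less[of m m'] \<open>lifted m\<close> \<open>\<not> lifted m'\<close> by (auto simp: bend_x_def)
next
  assume "\<not> lifted m" "lifted m'"
  then have "\<sigma> m \<le> m'" "m < b"
    using assms lifted_upward a_b by (auto simp: interval_cycle_def lifted_def)
  moreover have "1 \<le> \<sigma> m" using \<sigma>_bounds assms by auto
  ultimately show ?thesis
    using assms tx_add_le[of "\<sigma> m" m'] tx_pos[of m'] \<open>\<not> lifted m\<close> \<open>lifted m'\<close>
    by (auto simp: bend_x_def lifted_def)
next
  assume "\<not> lifted m" "\<not> lifted m'"
  then have "\<sigma> m < \<sigma> m'" using assms \<sigma>_mono_unlifted by blast
  moreover have "1 \<le> \<sigma> m" "\<sigma> m' \<le> n" using \<sigma>_bounds assms by auto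
  ultimately show ?thesis
    using tx_add_le[of "\<sigma> m" "\<sigma> m'"] \<open>\<not> lifted m\<close> \<open>\<not> lifted m'\<close> by (auto simp: bend_x_def)
qed

lemma corners:
  assumes "1 \<le> k" "k \<le> n"
  shows "n - k \<le> bend_x k \<and> bend_x k \<le> tx (\<sigma> k) \<and> k \<le> bend_y k \<and> bend_y k \<le> beta (\<sigma> k)"
proof (cases "lifted k")
  case True
  have "b \<le> beta b" using beta_bounds a_b by auto
  moreover have "bend_y k \<le> beta (\<sigma> k) \<and> bend_x k \<le> tx (\<sigma> k)"
  proof (cases "k = b")
    case True
    then show ?thesis
      using beta_drop tx_add_le[of a b] a_b \<open>lifted k\<close>
      by (simp add: bend_x_def bend_y_def interval_cycle_def)
  next
    case False
    then show ?thesis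
      using beta_tail[of k] assms \<open>lifted k\<close> a_b
      by (auto simp: bend_x_def bend_y_def interval_cycle_def lifted_def)
  qed
  ultimately show ?thesis
    using True assms lam_b_pos by (auto simp: bend_x_def bend_y_def lifted_def tx_def)
next
  case False
  then have "k \<le> \<sigma> k" "k \<noteq> b" using lifted_b by (auto simp: interval_cycle_def)
  moreover have "\<sigma> k \<le> n" using \<sigma>_bounds assms by blast
  moreover have "n - k \<le> tx (\<sigma> k)"
  proof (cases "k < b")
    case True
    then have "1 \<le> lam (\<sigma> k)" "\<sigma> k \<le> Suc k"
      using lam_antimono[of "\<sigma> k" b] lam_b_pos a_b assms by (auto simp: interval_cycle_def)
    then show ?thesis by (simp add: tx_def)
  next
    case False
    then show ?thesis using \<open>k \<noteq> b\<close> by (simp add: interval_cycle_def tx_def)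
  qed
  ultimately show ?thesis
    using False beta_bounds[of "\<sigma> k"] assms by (auto simp: bend_x_def bend_y_def)
qed

lemma paths_disjoint:
  assumes "1 \<le> m" "m < m'" "m' \<le> n"
  shows "set (path m) \<inter> set (path m') = {}"
  unfolding path_def
proof (rule staircases_disjoint)
  show "bend_x m' < bend_x m" using bend_x_strict_antimono assms .
  show "tx (\<sigma> m') < bend_x m \<or> beta (\<sigma> m) < bend_y m' \<or>
    (tx (\<sigma> m') \<le> bend_x m \<and> bend_x m < tx (\<sigma> m) \<and> bend_y m < bend_y m')"
  proof (cases "lifted m'")
    case False
    then show ?thesis using \<open>bend_x m' < bend_x m\<close> by (simp add: bend_x_def)
  next
    case m'_lifted: True
    show ?thesis
    proof (cases "lifted m")
      case True
      then have "\<sigma> m' = m'" "tx m' + 1 \<le> tx m" "tx m - 1 < tx (\<sigma> m)"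
        using assms tx_add_le[of m m'] tx_add_le[of a b] tx_pos[of m] a_b
        by (auto simp: lifted_def interval_cycle_def)
      then show ?thesis using True m'_lifted assms by (auto simp: bend_x_def bend_y_def lifted_def)
    next
      case False
      then have "m < b" using lifted_upward assms m'_lifted by blast
      consider "b < m'" | "m' = b" "m < a" | "m' = b" "a \<le> m"
        using m'_lifted by (fastforce simp: lifted_def)
      then show ?thesis
      proof cases
        case 1
        then have "tx m' < tx (\<sigma> m)"
          using tx_add_le[of "\<sigma> m" m'] \<sigma>_bounds[of m] \<open>m < b\<close> assms
          by (auto simp: interval_cycle_def)
        then show ?thesis using 1 False by (simp add: bend_x_def interval_cycle_def)
      next
        case 2
        then have "tx a < tx m" using tx_add_le[of m a] assms a_b by simp
        then show ?thesis using 2 False a_b by (simp add: bend_x_def interval_cycle_def)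
      next
        case 3
        then have "beta (\<sigma> m) \<le> beta b"
          using beta_between[of "Suc m"] \<open>m < b\<close> by (cases "Suc m = b") (auto simp: interval_cycle_def)
        then show ?thesis using 3 m'_lifted by (simp add: bend_y_def)
      qed
    qed
  qed
qed (use assms corners[of m] corners[of m'] in auto)

lemma path_in_LD: "path \<in> LD n lam beta \<sigma>"
  unfolding LD_def
proof (intro CollectI conjI ballI impI)
  fix m assume "m \<in> {1..n}"
  then have "n - m \<le> bend_x m" "bend_x m \<le> tx (\<sigma> m)" "m \<le> bend_y m" "bend_y m \<le> beta (\<sigma> m)" "1 \<le> m"
    using corners by auto
  note staircase = staircase_lattice_path[OF this, folded path_def]
  show "lattice_path (path m)" "hd (path m) = (n - m, m)" using staircase by simp_all
  show "last (path m) = terminal n lam beta (\<sigma> m)"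
    using staircase by (simp add: terminal_def tx_def)
next
  fix m m' assume "m \<in> {1..n}" "m' \<in> {1..n}" "m \<noteq> m'"
  then show "set (path m) \<inter> set (path m') = {}"
    using paths_disjoint[of m m'] paths_disjoint[of m' m] by (cases "m < m'") auto
qed

lemma not_nonpermutable: "\<not> nonpermutable n lam beta"
  using path_in_LD interval_cycle_permutes[OF a_b] interval_cycle_neq_id[OF a_b(2)]
  unfolding nonpermutable_def by blast

end

lemma last_index_above:
  fixes f :: "nat \<Rightarrow> 'a::linorder"
  assumes "i < b" "f b < f i"
  obtains a where "i \<le> a" "a < b" "f b < f a" "\<And>m. a < m \<Longrightarrow> m < b \<Longrightarrow> f m \<le> f b"
proof -
  let ?A = "{j. i \<le> j \<and> j < b \<and> f b < f j}"
  have "finite ?A" by (rule finite_subset[of _ "{..<b}"]) auto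
  moreover have "i \<in> ?A" using assms by auto
  ultimately have max: "Max ?A \<in> ?A" "\<And>m. m \<in> ?A \<Longrightarrow> m \<le> Max ?A"
    using Max_in Max_ge by blast+
  have "f m \<le> f b" if "Max ?A < m" "m < b" for m
  proof (rule ccontr)
    assume "\<not> f m \<le> f b"
    then have "m \<in> ?A" using max(1) that by auto
    then show False using max(2) that by fastforce
  qed
  with max show ?thesis by (intro that[of "Max ?A"]) auto
qed

lemma crit_le_top: "x \<in> crit L U beta \<Longrightarrow> x \<le> U"
  by (induction rule: crit.induct) auto

lemma crit_gt_low: "x \<in> crit L U beta \<Longrightarrow> L < U \<Longrightarrow> L < x"
  by (induction rule: crit.induct) auto

lemma finite_crit: "finite (crit L U beta)"
  by (rule finite_subset[of _ "{..U}"]) (auto dest: crit_le_top)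

lemma crit_slack_less:
  "x \<in> crit L U beta \<Longrightarrow> x < z \<Longrightarrow> z \<le> U \<Longrightarrow> int (beta x) - int x < int (beta z) - int z"
proof (induction arbitrary: z rule: crit.induct)
  case (step y x)
  consider "z < y" | "z = y" | "y < z" by linarith
  then show ?case
  proof cases
    case 1
    then have "\<not> int (beta y) - int (beta z) > int y - int z" using step by blast
    then show ?thesis using step by linarith
  next
    case 3
    then show ?thesis using step by fastforce
  qed (use step in simp)
qed simp

lemma carrel_top_bounds:
  assumes "i \<le> n"
  shows "i \<le> carrel_top n lam i" "carrel_top n lam i \<le> n"
    "carrel_top n lam i \<in> Rset n lam \<or> carrel_top n lam i = n"
proof -
  let ?S = "{q \<in> Rset n lam \<union> {n}. i \<le> q}"
  have "finite ?S" by (rule finite_subset[of _ "{..n}"]) (auto simp: Rset_def)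
  moreover have "n \<in> ?S" using assms by auto
  ultimately have "Min ?S \<in> ?S" using Min_in by blast
  then show "i \<le> carrel_top n lam i" "carrel_top n lam i \<le> n"
    "carrel_top n lam i \<in> Rset n lam \<or> carrel_top n lam i = n"
    unfolding carrel_top_def by (auto simp: Rset_def)
qed

lemma carrel_low_less: "1 \<le> t \<Longrightarrow> carrel_low n lam t < t"
proof -
  let ?S = "{q \<in> Rset n lam \<union> {0}. q < t}"
  assume "1 \<le> t"
  then have "Max ?S \<in> ?S" by (intro Max_in) (auto intro: finite_subset[of _ "{..<t}"])
  then show ?thesis unfolding carrel_low_def by auto
qed

lemma le_carrel_low: "q \<in> Rset n lam \<Longrightarrow> q < t \<Longrightarrow> q \<le> carrel_low n lam t"
  unfolding carrel_low_def by (intro Max_ge) (auto intro: finite_subset[of _ "{..<t}"])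

lemma lam_less_beyond_carrel:
  assumes "is_partition n lam" "t \<in> Rset n lam" "1 \<le> b" "b \<le> t" "t < m" "m \<le> n"
  shows "lam m < lam b"
proof -
  have "lam (Suc t) < lam t" using assms(2) by (simp add: Rset_def)
  moreover have "lam m \<le> lam (Suc t)" "lam t \<le> lam b"
    using is_partition_antimono[OF assms(1)] assms(2-6) by (auto simp: Rset_def)
  ultimately show ?thesis by simp
qed

context
  fixes n t L b :: nat and lam beta :: "nat \<Rightarrow> nat"
  assumes partition: "is_partition n lam" and upper: "beta \<in> Upper n"
    and carrel_top: "t \<le> n" "t \<in> Rset n lam \<or> t = n"
    and critical: "b \<in> crit L t beta" "1 \<le> b"
begin

text \<open>If \<open>t = n\<close>, then \<open>beta b - b < beta n - n \<le> 0\<close> unless \<open>b = n\<close>, contradicting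
  \<open>beta b \<ge> b\<close>; and \<open>beta n = n\<close> is maximal. Otherwise \<open>lam\<close> drops right after \<open>t\<close>.\<close>

lemma crit_lam_pos:
  assumes "1 \<le> j" "j \<le> n" "beta b < beta j"
  shows "1 \<le> lam b"
proof (cases "t = n")
  case True
  have "b \<le> beta b" "beta b \<le> n" "beta n \<le> n" "beta j \<le> n"
    using upper critical crit_le_top[OF critical(1)] True assms by (auto simp: Upper_def)
  moreover have "b = n"
    using crit_slack_less[OF critical(1), of n] crit_le_top[OF critical(1)] True calculation
    by (cases "b = n") auto
  ultimately show ?thesis using assms by simp
next
  case False
  then show ?thesis
    using lam_less_beyond_carrel[OF partition _ critical(2) crit_le_top[OF critical(1)], of "Suc t"]
      carrel_top by (auto simp: Rset_def)
qed

lemma crit_tail: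
  assumes "b < m" "m \<le> n" "lam m = lam b"
  shows "beta b + (m - b) < beta m"
proof -
  have "m \<le> t"
  proof (rule ccontr)
    assume "\<not> m \<le> t"
    then have "t \<in> Rset n lam" using carrel_top assms by auto
    from lam_less_beyond_carrel[OF partition this critical(2) crit_le_top[OF critical(1)], of m]
    show False using assms \<open>\<not> m \<le> t\<close> by simp
  qed
  then show ?thesis using crit_slack_less[OF critical(1) assms(1)] assms(1) by linarith
qed

lemma nonpermutable_crit_dominates:
  assumes "nonpermutable n lam beta" "1 \<le> i" "i < b"
  shows "beta i \<le> beta b"
proof (rule ccontr)
  assume "\<not> beta i \<le> beta b"
  then obtain a where a: "i \<le> a" "a < b" "beta b < beta a" "\<And>m. a < m \<Longrightarrow> m < b \<Longrightarrow> beta m \<le> beta b"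
    using last_index_above[of i b beta] assms by auto
  have "b \<le> n" using crit_le_top[OF critical(1)] carrel_top by simp
  have "rotation_witness n lam beta a b"
  proof
    show "1 \<le> lam b" using crit_lam_pos[of a] a assms \<open>b \<le> n\<close> by simp
  qed (use partition upper a assms \<open>b \<le> n\<close> crit_tail in auto)
  then show False using rotation_witness.not_nonpermutable assms(1) by blast
qed

end

lemma nonpermutable_flag_critical:
  assumes "is_partition n lam" "beta \<in> Upper n" "nonpermutable n lam beta" "q \<in> Rset n lam"
  shows "beta q \<le> beta (Min (crit_carrel n lam beta (carrel_top n lam (Suc q))))"
proof -
  define t where "t = carrel_top n lam (Suc q)"
  define L where "L = carrel_low n lam t"
  have q: "1 \<le> q" "q < n" using assms(4) by (auto simp: Rset_def)
  then have t: "Suc q \<le> t" "t \<le> n" "t \<in> Rset n lam \<or> t = n"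
    using carrel_top_bounds[of "Suc q" n lam] unfolding t_def by auto
  have "q \<le> L" "L < t"
    using le_carrel_low[OF assms(4)] carrel_low_less t unfolding L_def by auto
  have k: "Min (crit L t beta) \<in> crit L t beta"
    using Min_in[OF finite_crit] crit.top by blast
  then have "q < Min (crit L t beta)" using crit_gt_low \<open>q \<le> L\<close> \<open>L < t\<close> by fastforce
  with nonpermutable_crit_dominates[OF assms(1,2) t(2,3) k] assms(3) q
  show ?thesis by (simp add: crit_carrel_def t_def L_def)
qed

lemma nonpermutable_below_platform:
  assumes "is_partition n lam" "beta \<in> Upper n" "nonpermutable n lam beta" "i \<in> {1..n}"
  shows "beta i \<le> platform n lam beta i"
proof -
  define t where "t = carrel_top n lam i"
  define X where "X = {x \<in> crit (carrel_low n lam t) t beta. i \<le> x}"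
  have t: "i \<le> t" "t \<le> n" "t \<in> Rset n lam \<or> t = n"
    using carrel_top_bounds[of i n lam] assms(4) unfolding t_def by auto
  then have "t \<in> X" unfolding X_def by (simp add: crit.top)
  moreover have "finite X" unfolding X_def using finite_crit by simp
  ultimately have "Min X \<in> X" using Min_in by blast
  then have b: "Min X \<in> crit (carrel_low n lam t) t beta" "i \<le> Min X" unfolding X_def by auto
  have "beta i \<le> beta (Min X)"
    using nonpermutable_crit_dominates[OF assms(1,2) t(2,3) b(1)] assms(3,4) b(2)
    by (cases "i = Min X") auto
  then show ?thesis by (simp add: platform_def xcrit_def crit_carrel_def X_def t_def)
qed

theorem proposition6p3:
  fixes n :: nat and lam beta :: "nat \<Rightarrow> nat"
  assumes "1 \<le> n"
    and "is_partition n lam"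
    and "beta \<in> Upper n"
    and "nonpermutable n lam beta"
  shows "beta \<in> UGC n lam \<inter> UBP n lam"
  using nonpermutable_flag_critical[OF assms(2-4)] nonpermutable_below_platform[OF assms(2-4)] assms(3)
  unfolding UGC_def UBP_def by blast

end
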